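(* If $\Gamma ; \Delta \vdash \mathcal{C}$ in $\lambda_{\text{act}}$, then $[\![\Gamma]\!] ; [\![\Delta]\!] \vdash [\![\mathcal{C}]\!]$ in $\lambda_{\text{ch}}$.
   Context: $\lambda_{\text{act}}$ is a concurrent fine-grain call-by-value $\lambda$-calculus with actors: types $A ::= \mathbf{1} \mid A \to^{C} B \mid \mathsf{ActorRef}(A)$ (the annotation $C$ on an arrow is the mailbox type of the actor evaluating the function), computations include $\mathsf{spawn}\, M$, $\mathsf{send}\, V\, W$, $\mathsf{receive}$, $\mathsf{self}$; term judgements are $\Gamma \mid B \vdash M : A$ ($B$ the mailbox type). Configurations are $\mathcal{C} \parallel \mathcal{D}$, $(\nu a)\mathcal{C}$ and actors $\langle a, M, \vec{V}\rangle$ (name $a$, running $M$, mailbox $\vec V$), typed by $\Gamma;\Delta \vdash \mathcal{C}$ with $\Delta$ a linear environment mapping names to mailbox types (rules: Par splits $\Delta$; $(\nu a)\mathcal{C}$ typed if $\Gamma, a{:}\mathsf{ActorRef}(A); \Delta, a{:}A \vdash \mathcal{C}$; $\Gamma, a{:}\mathsf{ActorRef}(A); a{:}A \vdash \langle a,M,\vec V\rangle$ if $\Gamma, a{:}\mathsf{ActorRef}(A) \mid A \vdash M:\mathbf{1}$ and each $V_i : A$). $\lambda_{\text{ch}}$ is the analogous calculus with asynchronous channels: types $\mathbf{1} \mid A\to B \mid \mathsf{Chan}(A)$, primitives $\mathsf{fork}\,M$, $\mathsf{give}\,V\,W$, $\mathsf{take}\,V$, $\mathsf{newCh}$; configurations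 are parallel composition, $(\nu a)\mathcal{C}$, terms $M$ (typed with empty $\Delta$, $M:\mathbf{1}$) and buffers $a(\vec V)$ (typed $\Gamma; a{:}A \vdash a(\vec V)$ when each $V_i : A$), with $(\nu a)\mathcal{C}$ typed if $\Gamma, a{:}\mathsf{Chan}(A); \Delta, a{:}A \vdash \mathcal{C}$. The translation $[\![-]\!]$ from $\lambda_{\text{act}}$ to $\lambda_{\text{ch}}$: on types $[\![\mathsf{ActorRef}(A)]\!] = \mathsf{Chan}([\![A]\!])$, $[\![A \to^{C} B]\!] = [\![A]\!] \to \mathsf{Chan}([\![C]\!]) \to [\![B]\!]$, $[\![\mathbf{1}]\!]=\mathbf{1}$; on values $[\![\lambda x.M]\!] = \lambda x.\lambda ch.([\![M]\!]\, ch)$, identity otherwise; on terms, parameterised by a mailbox channel $ch$: $\mathsf{receive} \mapsto \mathsf{take}\, ch$, $\mathsf{self} \mapsto \mathsf{return}\, ch$, $\mathsf{send}\,V\,W \mapsto \mathsf{give}\,[\![V]\!]\,[\![W]\!]$, $\mathsf{spawn}\,M \mapsto$ create a new channel $chMb$, fork $[\![M]\!]\,chMb$, return $chMb$, application $V\,W \mapsto$ let $f \Leftarrow [\![V]\!]\,[\![W]\!]$ in $f\,ch$, homomorphic on let/return. On configurations the translation is homomorphic on $\parallel$ and $\nu$, and $[\![\langle a, M, \vec V\rangle]\!] = a([\![\vec V]\!]) \parallel ([\![M]\!]\, a)$ (mailbox becomes a buffer, $a$ used as the mailbox channel). Environments $\Gamma$ and $\Delta$ are translated pointwise on their types. *)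

theory Defs
  imports Main
begin

text \<open>Both calculi use de Bruijn indices for variables; actor/channel names are
  variables too (they live in \<Gamma>), and \<open>\<nu>\<close> is a binder for index 0.
  Linear environments \<Delta> are partial maps from indices to mailbox types.\<close>

datatype aty = AUnit | AFun aty aty aty (* AFun A C B  =  A \<rightarrow>^C B *) | ActorRef aty

datatype aval = AVar nat | ALam acomp | AUnitV
and acomp = AApp aval aval | ALet acomp acomp | AReturn aval
  | ASpawn acomp | ASend aval aval | AReceive | ASelf

inductive aval_t :: "aty list \<Rightarrow> aval \<Rightarrow> aty \<Rightarrow> bool"
  and acomp_t :: "aty list \<Rightarrow> aty \<Rightarrow> acomp \<Rightarrow> aty \<Rightarrow> bool"
  (* acomp_t \<Gamma> B M A  :  \<Gamma> | B \<turnstile> M : A ,  B the mailbox type *)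
where
  AT_Var: "n < length \<Gamma> \<Longrightarrow> aval_t \<Gamma> (AVar n) (\<Gamma> ! n)"
| AT_Lam: "acomp_t (A # \<Gamma>) C M B \<Longrightarrow> aval_t \<Gamma> (ALam M) (AFun A C B)"
| AT_Unit: "aval_t \<Gamma> AUnitV AUnit"
| AT_App: "aval_t \<Gamma> V (AFun A C B) \<Longrightarrow> aval_t \<Gamma> W A \<Longrightarrow> acomp_t \<Gamma> C (AApp V W) B"
| AT_Let: "acomp_t \<Gamma> C M A \<Longrightarrow> acomp_t (A # \<Gamma>) C N B \<Longrightarrow> acomp_t \<Gamma> C (ALet M N) B"
| AT_Return: "aval_t \<Gamma> V A \<Longrightarrow> acomp_t \<Gamma> C (AReturn V) A"
| AT_Spawn: "acomp_t \<Gamma> A M AUnit \<Longrightarrow> acomp_t \<Gamma> C (ASpawn M) (ActorRef A)"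
| AT_Send: "aval_t \<Gamma> V A \<Longrightarrow> aval_t \<Gamma> W (ActorRef A) \<Longrightarrow> acomp_t \<Gamma> C (ASend V W) AUnit"
| AT_Receive: "acomp_t \<Gamma> A AReceive A"
| AT_Self: "acomp_t \<Gamma> A ASelf (ActorRef A)"

datatype acfg = APar acfg acfg | ANu acfg | AActor nat acomp "aval list"

definition disjoint_dom :: "(nat \<Rightarrow> 'a option) \<Rightarrow> (nat \<Rightarrow> 'a option) \<Rightarrow> bool" where
  "disjoint_dom D1 D2 \<longleftrightarrow> dom D1 \<inter> dom D2 = {}"

definition bind0 :: "'a \<Rightarrow> (nat \<Rightarrow> 'a option) \<Rightarrow> (nat \<Rightarrow> 'a option)" where
  "bind0 A D = (\<lambda>n. case n of 0 \<Rightarrow> Some A | Suc k \<Rightarrow> D k)"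

inductive acfg_t :: "aty list \<Rightarrow> (nat \<Rightarrow> aty option) \<Rightarrow> acfg \<Rightarrow> bool" where
  ACT_Par: "acfg_t \<Gamma> D1 C1 \<Longrightarrow> acfg_t \<Gamma> D2 C2 \<Longrightarrow> disjoint_dom D1 D2
            \<Longrightarrow> acfg_t \<Gamma> (D1 ++ D2) (APar C1 C2)"
| ACT_Nu: "acfg_t (ActorRef A # \<Gamma>) (bind0 A D) C \<Longrightarrow> acfg_t \<Gamma> D (ANu C)"
| ACT_Actor: "a < length \<Gamma> \<Longrightarrow> \<Gamma> ! a = ActorRef A \<Longrightarrow> acomp_t \<Gamma> A M AUnit
     \<Longrightarrow> (\<forall>V \<in> set Vs. aval_t \<Gamma> V A)
     \<Longrightarrow> acfg_t \<Gamma> [a \<mapsto> A] (AActor a M Vs)"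

datatype cty = CUnit | CFun cty cty | Chan cty

datatype cval = CVar nat | CLam ccomp | CUnitV
and ccomp = CApp cval cval | CLet ccomp ccomp | CReturn cval
  | CFork ccomp | CGive cval cval | CTake cval | CNewCh

inductive cval_t :: "cty list \<Rightarrow> cval \<Rightarrow> cty \<Rightarrow> bool"
  and ccomp_t :: "cty list \<Rightarrow> ccomp \<Rightarrow> cty \<Rightarrow> bool"
where
  CT_Var: "n < length \<Gamma> \<Longrightarrow> cval_t \<Gamma> (CVar n) (\<Gamma> ! n)"
| CT_Lam: "ccomp_t (A # \<Gamma>) M B \<Longrightarrow> cval_t \<Gamma> (CLam M) (CFun A B)"
| CT_Unit: "cval_t \<Gamma> CUnitV CUnit"
| CT_App: "cval_t \<Gamma> V (CFun A B) \<Longrightarrow> cval_t \<Gamma> W A \<Longrightarrow> ccomp_t \<Gamma> (CApp V W) B"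
| CT_Let: "ccomp_t \<Gamma> M A \<Longrightarrow> ccomp_t (A # \<Gamma>) N B \<Longrightarrow> ccomp_t \<Gamma> (CLet M N) B"
| CT_Return: "cval_t \<Gamma> V A \<Longrightarrow> ccomp_t \<Gamma> (CReturn V) A"
| CT_Fork: "ccomp_t \<Gamma> M CUnit \<Longrightarrow> ccomp_t \<Gamma> (CFork M) CUnit"
| CT_Give: "cval_t \<Gamma> V A \<Longrightarrow> cval_t \<Gamma> W (Chan A) \<Longrightarrow> ccomp_t \<Gamma> (CGive V W) CUnit"
| CT_Take: "cval_t \<Gamma> V (Chan A) \<Longrightarrow> ccomp_t \<Gamma> (CTake V) A"
| CT_NewCh: "ccomp_t \<Gamma> CNewCh (Chan A)"

datatype ccfg = CPar ccfg ccfg | CNu ccfg | CTerm ccomp | CBuf nat "cval list"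

inductive ccfg_t :: "cty list \<Rightarrow> (nat \<Rightarrow> cty option) \<Rightarrow> ccfg \<Rightarrow> bool" where
  CCT_Par: "ccfg_t \<Gamma> D1 C1 \<Longrightarrow> ccfg_t \<Gamma> D2 C2 \<Longrightarrow> disjoint_dom D1 D2
            \<Longrightarrow> ccfg_t \<Gamma> (D1 ++ D2) (CPar C1 C2)"
| CCT_Nu: "ccfg_t (Chan A # \<Gamma>) (bind0 A D) C \<Longrightarrow> ccfg_t \<Gamma> D (CNu C)"
| CCT_Term: "ccomp_t \<Gamma> M CUnit \<Longrightarrow> ccfg_t \<Gamma> Map.empty (CTerm M)"
| CCT_Buf: "(\<forall>V \<in> set Vs. cval_t \<Gamma> V A) \<Longrightarrow> ccfg_t \<Gamma> [a \<mapsto> A] (CBuf a Vs)"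

fun tr_ty :: "aty \<Rightarrow> cty" where
  "tr_ty AUnit = CUnit"
| "tr_ty (ActorRef A) = Chan (tr_ty A)"
| "tr_ty (AFun A C B) = CFun (tr_ty A) (CFun (Chan (tr_ty C)) (tr_ty B))"

definition ext_ren :: "(nat \<Rightarrow> nat) \<Rightarrow> nat \<Rightarrow> nat" where
  "ext_ren \<rho> n = (case n of 0 \<Rightarrow> 0 | Suc m \<Rightarrow> Suc (\<rho> m))"

text \<open>\<open>tr_v \<rho> V\<close> / \<open>tr_c \<rho> ch M\<close>: the translation of the paper, fused with a
  renaming \<rho> of the free variables of the source term (needed in de Bruijn form
  because the translation introduces new binders: the \<open>ch\<close> parameter of a
  lambda, the \<open>f\<close> of an application, the \<open>chMb\<close> of a spawn).
  \<open>ch\<close> is the index of the mailbox channel variable in the target context.\<close>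
primrec tr_v :: "(nat \<Rightarrow> nat) \<Rightarrow> aval \<Rightarrow> cval"
  and tr_c :: "(nat \<Rightarrow> nat) \<Rightarrow> nat \<Rightarrow> acomp \<Rightarrow> ccomp" where
  "tr_v \<rho> (AVar n) = CVar (\<rho> n)"
| "tr_v \<rho> AUnitV = CUnitV"
| "tr_v \<rho> (ALam M) = CLam (CReturn (CLam (tr_c (\<lambda>n. Suc (ext_ren \<rho> n)) 0 M)))"
    (* \<lambda>x. return (\<lambda>ch. [[M]] ch)  (fine-grain: a function body is a computation) *)
| "tr_c \<rho> ch (AApp V W) = CLet (CApp (tr_v \<rho> V) (tr_v \<rho> W)) (CApp (CVar 0) (CVar (Suc ch)))"
    (* let f \<Leftarrow> [[V]] [[W]] in f ch *)
| "tr_c \<rho> ch (ALet M N) = CLet (tr_c \<rho> ch M) (tr_c (ext_ren \<rho>) (Suc ch) N)"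
| "tr_c \<rho> ch (AReturn V) = CReturn (tr_v \<rho> V)"
| "tr_c \<rho> ch (ASpawn M) = CLet CNewCh (CLet (CFork (tr_c (\<lambda>n. Suc (\<rho> n)) 0 M)) (CReturn (CVar 1)))"
    (* let chMb \<Leftarrow> newCh in let _ \<Leftarrow> fork ([[M]] chMb) in return chMb *)
| "tr_c \<rho> ch (ASend V W) = CGive (tr_v \<rho> V) (tr_v \<rho> W)"
| "tr_c \<rho> ch AReceive = CTake (CVar ch)"
| "tr_c \<rho> ch ASelf = CReturn (CVar ch)"

definition tr_val :: "aval \<Rightarrow> cval" where "tr_val = tr_v id"
definition tr_comp :: "nat \<Rightarrow> acomp \<Rightarrow> ccomp" where "tr_comp ch M = tr_c id ch M"

fun tr_cfg :: "acfg \<Rightarrow> ccfg" where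
  "tr_cfg (APar C D) = CPar (tr_cfg C) (tr_cfg D)"
| "tr_cfg (ANu C) = CNu (tr_cfg C)"
| "tr_cfg (AActor a M Vs) = CPar (CBuf a (map tr_val Vs)) (CTerm (tr_comp a M))"

definition tr_env :: "aty list \<Rightarrow> cty list" where "tr_env \<Gamma> = map tr_ty \<Gamma>"
definition tr_lenv :: "(nat \<Rightarrow> aty option) \<Rightarrow> (nat \<Rightarrow> cty option)" where
  "tr_lenv D = map_option tr_ty \<circ> D"

end

theory Submission
  imports Defs
begin

text \<open>The translation preserves typing term by term: a source term well typed in \<open>\<Gamma>\<close>
  with mailbox type \<open>B\<close> translates, for any mailbox channel variable of type
  \<open>Chan [[B]]\<close>, to a target term of the translated type. Because the translation
  introduces binders, this is proved for an arbitrary renaming of the free variables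
  that sends each source variable to a target variable of the translated type. At the
  level of configurations, an actor becomes its mailbox buffer in parallel with its
  body, whose mailbox channel is the actor's own name, so it uses exactly the linear
  resource the actor did.\<close>

lemma cval_t_CVar_iff: "cval_t \<Gamma> (CVar n) T \<longleftrightarrow> n < length \<Gamma> \<and> T = \<Gamma> ! n"
  by (auto elim: cval_t.cases intro: CT_Var)

lemma cval_t_CVar_0: "cval_t (B # \<Gamma>) (CVar 0) B"
  by (simp add: cval_t_CVar_iff)

lemma cval_t_CVar_Suc: "cval_t (B # \<Gamma>) (CVar (Suc n)) T \<longleftrightarrow> cval_t \<Gamma> (CVar n) T"
  by (simp add: cval_t_CVar_iff)

definition tr_renaming :: "aty list \<Rightarrow> (nat \<Rightarrow> nat) \<Rightarrow> cty list \<Rightarrow> bool" where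
  "tr_renaming \<Gamma> \<rho> \<Gamma>' \<longleftrightarrow> (\<forall>n < length \<Gamma>. cval_t \<Gamma>' (CVar (\<rho> n)) (tr_ty (\<Gamma> ! n)))"

lemma tr_renaming_id: "tr_renaming \<Gamma> id (tr_env \<Gamma>)"
  by (simp add: tr_renaming_def cval_t_CVar_iff tr_env_def)

lemma tr_renaming_shift:
  "tr_renaming \<Gamma> \<rho> \<Gamma>' \<Longrightarrow> tr_renaming \<Gamma> (\<lambda>n. Suc (\<rho> n)) (B # \<Gamma>')"
  by (simp add: tr_renaming_def cval_t_CVar_Suc)

lemma tr_renaming_ext_ren:
  "tr_renaming \<Gamma> \<rho> \<Gamma>' \<Longrightarrow> tr_renaming (A # \<Gamma>) (ext_ren \<rho>) (tr_ty A # \<Gamma>')"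
  by (auto simp: tr_renaming_def ext_ren_def cval_t_CVar_0 cval_t_CVar_Suc
      less_Suc_eq_0_disj)

lemma
  shows tr_v_typed: "aval_t \<Gamma> V A \<Longrightarrow> tr_renaming \<Gamma> \<rho> \<Gamma>' \<Longrightarrow> cval_t \<Gamma>' (tr_v \<rho> V) (tr_ty A)"
    and tr_c_typed: "acomp_t \<Gamma> B M A \<Longrightarrow> tr_renaming \<Gamma> \<rho> \<Gamma>'
         \<Longrightarrow> cval_t \<Gamma>' (CVar ch) (Chan (tr_ty B)) \<Longrightarrow> ccomp_t \<Gamma>' (tr_c \<rho> ch M) (tr_ty A)"
proof (induction arbitrary: \<rho> \<Gamma>' and \<rho> \<Gamma>' ch rule: aval_t_acomp_t.inducts)
  case (AT_Var n \<Gamma>)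
  then show ?case by (simp add: tr_renaming_def)
next
  case (AT_Lam A \<Gamma> C M B)
  have "tr_renaming (A # \<Gamma>) (\<lambda>n. Suc (ext_ren \<rho> n)) (Chan (tr_ty C) # tr_ty A # \<Gamma>')"
    using AT_Lam.prems by (intro tr_renaming_shift tr_renaming_ext_ren)
  then have "ccomp_t (Chan (tr_ty C) # tr_ty A # \<Gamma>') (tr_c (\<lambda>n. Suc (ext_ren \<rho> n)) 0 M) (tr_ty B)"
    using AT_Lam.IH cval_t_CVar_0 by blast
  then show ?case by (auto intro!: CT_Lam CT_Return)
next
  case (AT_Unit \<Gamma>)
  then show ?case by (simp add: CT_Unit)
next
  case (AT_App \<Gamma> V A C B W)
  let ?F = "CFun (Chan (tr_ty C)) (tr_ty B)"
  have "ccomp_t \<Gamma>' (CApp (tr_v \<rho> V) (tr_v \<rho> W)) ?F"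
    using AT_App by (fastforce intro: CT_App)
  moreover have "ccomp_t (?F # \<Gamma>') (CApp (CVar 0) (CVar (Suc ch))) (tr_ty B)"
    using AT_App.prems(2) by (auto intro: CT_App cval_t_CVar_0 simp: cval_t_CVar_Suc)
  ultimately show ?case by (auto intro: CT_Let)
next
  case (AT_Let \<Gamma> C M A N B)
  have "ccomp_t (tr_ty A # \<Gamma>') (tr_c (ext_ren \<rho>) (Suc ch) N) (tr_ty B)"
    using AT_Let by (simp add: tr_renaming_ext_ren cval_t_CVar_Suc)
  with AT_Let show ?case by (auto intro: CT_Let)
next
  case (AT_Return \<Gamma> V A C)
  then show ?case by (auto intro: CT_Return)
next
  case (AT_Spawn \<Gamma> A M C)
  let ?G = "Chan (tr_ty A) # \<Gamma>'"
  have "ccomp_t ?G (tr_c (\<lambda>n. Suc (\<rho> n)) 0 M) CUnit"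
    using AT_Spawn tr_renaming_shift cval_t_CVar_0 by fastforce
  moreover have "ccomp_t (CUnit # ?G) (CReturn (CVar 1)) (Chan (tr_ty A))"
    by (simp add: CT_Return cval_t_CVar_iff)
  ultimately show ?case by (auto intro!: CT_Let CT_NewCh CT_Fork)
next
  case (AT_Send \<Gamma> V A W C)
  then show ?case by (fastforce intro: CT_Give)
next
  case (AT_Receive \<Gamma> A)
  then show ?case by (auto intro: CT_Take)
next
  case (AT_Self \<Gamma> A)
  then show ?case by (auto intro: CT_Return)
qed

lemma tr_lenv_map_add: "tr_lenv (D1 ++ D2) = tr_lenv D1 ++ tr_lenv D2"
  by (rule ext) (auto simp: tr_lenv_def map_add_def split: option.splits)

lemma disjoint_dom_tr_lenv: "disjoint_dom (tr_lenv D1) (tr_lenv D2) \<longleftrightarrow> disjoint_dom D1 D2"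
  by (simp add: disjoint_dom_def tr_lenv_def)

lemma tr_lenv_bind0: "tr_lenv (bind0 A D) = bind0 (tr_ty A) (tr_lenv D)"
  by (rule ext) (auto simp: tr_lenv_def bind0_def split: nat.splits)

lemma tr_lenv_singleton: "tr_lenv [a \<mapsto> A] = [a \<mapsto> tr_ty A]"
  by (rule ext) (auto simp: tr_lenv_def)

theorem theorem18:
  assumes "acfg_t \<Gamma> \<Delta> \<C>"
  shows "ccfg_t (tr_env \<Gamma>) (tr_lenv \<Delta>) (tr_cfg \<C>)"
  using assms
proof (induction rule: acfg_t.induct)
  case (ACT_Par \<Gamma> D1 C1 D2 C2)
  then show ?case by (simp add: CCT_Par tr_lenv_map_add disjoint_dom_tr_lenv)
next
  case (ACT_Nu A \<Gamma> D C)
  then show ?case by (auto simp: tr_lenv_bind0 tr_env_def intro!: CCT_Nu)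
next
  case (ACT_Actor a \<Gamma> A M Vs)
  have mailbox: "cval_t (tr_env \<Gamma>) (CVar a) (Chan (tr_ty A))"
    using ACT_Actor(1,2) by (simp add: cval_t_CVar_iff tr_env_def)
  have "ccomp_t (tr_env \<Gamma>) (tr_comp a M) CUnit"
    using tr_c_typed[OF ACT_Actor(3) tr_renaming_id mailbox] by (simp add: tr_comp_def)
  moreover have "\<forall>V \<in> set (map tr_val Vs). cval_t (tr_env \<Gamma>) V (tr_ty A)"
    using ACT_Actor(4) tr_v_typed[OF _ tr_renaming_id] by (auto simp: tr_val_def)
  ultimately have "ccfg_t (tr_env \<Gamma>) ([a \<mapsto> tr_ty A] ++ Map.empty)
      (CPar (CBuf a (map tr_val Vs)) (CTerm (tr_comp a M)))"
    by (intro CCT_Par CCT_Buf CCT_Term) (auto simp: disjoint_dom_def)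
  then show ?case by (simp only: tr_lenv_singleton tr_cfg.simps map_add_empty)
qed

end
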